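(* For every $\varepsilon>0$ and $v\in\mathbb R$ there exist constants $A,B>0$ and $p_\varepsilon>0$ such that for all $p<p_\varepsilon$ and all $n\ge 1$, \[\mathbb P\big(T^p_{site}((0,0),(n,\lceil vn\rceil))\le n(v+1-\varepsilon)\big)\le A\exp(-Bn).\]
   Context: Site percolation model with parameter $p\in[0,1]$: each site (vertex) of $\mathbb Z^2$ receives an independent weight equal to $0$ with probability $p$ and $1$ with probability $1-p$. A path $(z_0,z_1,\dots)$ is semi-directed if $z_{k+1}-z_k\in\{(1,0),(0,1),(0,-1)\}$ for all $k$. The passage time of a path is the sum of the weights of the sites it visits, and $T^p_{site}(u,w)$ is the infimum of passage times over semi-directed paths from $u$ to $w$. *)

theory Defs
  imports "HOL-Probability.Probability"
begin

type_synonym site = "int \<times> int"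

definition sd_step :: "site \<Rightarrow> site \<Rightarrow> bool" where
  "sd_step z z' \<longleftrightarrow> z' - z \<in> {(1,0), (0,1), (0,-1)}"

definition sd_paths :: "site \<Rightarrow> site \<Rightarrow> site list set" where
  "sd_paths u w = {\<pi>. \<pi> \<noteq> [] \<and> hd \<pi> = u \<and> last \<pi> = w \<and>
       (\<forall>i. Suc i < length \<pi> \<longrightarrow> sd_step (\<pi> ! i) (\<pi> ! Suc i))}"

definition passage_time :: "(site \<Rightarrow> nat) \<Rightarrow> site list \<Rightarrow> nat" where
  "passage_time \<omega> \<pi> = sum_list (map \<omega> \<pi>)"

definition T_site :: "(site \<Rightarrow> nat) \<Rightarrow> site \<Rightarrow> site \<Rightarrow> nat" where
  "T_site \<omega> u w = (INF \<pi> \<in> sd_paths u w. passage_time \<omega> \<pi>)"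

text \<open>Site percolation configuration space: each site is True (weight 1) with probability
  1-p and False (weight 0) with probability p, independently (infinite product measure).\<close>
definition site_perc :: "real \<Rightarrow> (site \<Rightarrow> bool) measure" where
  "site_perc p = PiM UNIV (\<lambda>_. measure_pmf (bernoulli_pmf (1 - p)))"

definition weight_of :: "(site \<Rightarrow> bool) \<Rightarrow> site \<Rightarrow> nat" where
  "weight_of b z = (if b z then 1 else 0)"

end

theory Submission
  imports Defs
begin

(* Any semi-directed path from (0,0) to (n,m) visits at least L + 1 = n + |m| + 1 sites and may be
  taken self-avoiding. If its passage time is at most n (v + 1 - epsilon), then, as |m| >= v n,
  at least k = ceiling (epsilon n) of its first L + 1 sites have weight 0. A union bound over the
  at most 3^L semi-directed walks of L steps and the at most 2^(L+1) ways to choose k of their sites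
  bounds the probability by 6^(L+1) p^k <= 6^((3 + |v|) n) p^(epsilon n), which is below exp (-n)
  once p is small enough. *)

lemma space_site_perc [simp]: "space (site_perc p) = UNIV"
  by (simp add: site_perc_def space_PiM)

lemma prob_space_site_perc: "prob_space (site_perc p)"
  unfolding site_perc_def by (intro prob_space_PiM prob_space_measure_pmf)

definition zero_on :: "site set \<Rightarrow> (site \<Rightarrow> bool) set" where
  "zero_on K = {b. \<forall>z\<in>K. \<not> b z}"

lemma zero_on_eq_prod_emb:
  "zero_on K = prod_emb UNIV (\<lambda>_. measure_pmf (bernoulli_pmf (1 - p))) K (Pi\<^sub>E K (\<lambda>_. {False}))"
  by (auto simp: zero_on_def prod_emb_iff restrict_def PiE_iff fun_eq_iff) (metis (full_types))

lemma sets_zero_on: "finite K \<Longrightarrow> zero_on K \<in> sets (site_perc p)"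
  unfolding site_perc_def zero_on_eq_prod_emb[of K p]
  by (intro measurable_prod_emb sets_PiM_I_finite) auto

lemma measure_zero_on:
  assumes "finite K" "0 \<le> p" "p \<le> 1"
  shows "measure (site_perc p) (zero_on K) = p ^ card K"
proof -
  have "emeasure (site_perc p) (zero_on K) =
      (\<Prod>z\<in>K. emeasure (measure_pmf (bernoulli_pmf (1 - p))) {False})"
    unfolding site_perc_def zero_on_eq_prod_emb[of K p]
    by (rule emeasure_PiM_emb) (auto simp: assms prob_space_measure_pmf)
  also have "\<dots> = ennreal (p ^ card K)"
    using assms by (simp add: emeasure_pmf_single prod_ennreal ennreal_power)
  finally show ?thesis
    using assms by (simp add: measure_def)
qed

lemma borel_measurable_passage_time:
  "(\<lambda>b. real (passage_time (weight_of b) \<pi>)) \<in> borel_measurable (site_perc p)"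
  unfolding site_perc_def passage_time_def weight_of_def by (induction \<pi>) auto

lemma passage_time_distinct:
  assumes "distinct \<pi>"
  shows "passage_time (weight_of b) \<pi> = card {z \<in> set \<pi>. b z}"
proof -
  have "passage_time (weight_of b) \<pi> = (\<Sum>z\<in>set \<pi>. weight_of b z)"
    using assms by (simp add: passage_time_def sum_list_distinct_conv_sum_set)
  also have "\<dots> = card {z \<in> set \<pi>. b z}"
    by (simp add: weight_of_def sum.If_cases Int_def)
  finally show ?thesis .
qed

lemma sd_step_iff:
  "sd_step z z' \<longleftrightarrow> z' = (fst z + 1, snd z) \<or> z' = (fst z, snd z + 1) \<or> z' = (fst z, snd z - 1)"
  by (cases z; cases z') (auto simp: sd_step_def)

lemma sd_paths_successively:
  "sd_paths u w = {\<pi>. \<pi> \<noteq> [] \<and> hd \<pi> = u \<and> last \<pi> = w \<and> successively sd_step \<pi>}"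
  by (simp add: sd_paths_def successively_conv_nth)

lemma sd_paths_snoc: "\<pi> \<in> sd_paths u w \<Longrightarrow> sd_step w z \<Longrightarrow> \<pi> @ [z] \<in> sd_paths u z"
  by (auto simp: sd_paths_successively successively_append_iff)

lemma sd_paths_refl: "[u] \<in> sd_paths u u"
  by (simp add: sd_paths_successively)

lemma sd_paths_vertical_nonempty:
  "sd_paths u (fst u, snd u + int k) \<noteq> {} \<and> sd_paths u (fst u, snd u - int k) \<noteq> {}"
proof (induction k)
  case 0
  then show ?case using sd_paths_refl[of u] by auto
next
  case (Suc k)
  then obtain \<pi>\<^sub>1 \<pi>\<^sub>2 where "\<pi>\<^sub>1 \<in> sd_paths u (fst u, snd u + int k)" "\<pi>\<^sub>2 \<in> sd_paths u (fst u, snd u - int k)"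
    by blast
  then have "\<pi>\<^sub>1 @ [(fst u, snd u + int (Suc k))] \<in> sd_paths u (fst u, snd u + int (Suc k))"
    and "\<pi>\<^sub>2 @ [(fst u, snd u - int (Suc k))] \<in> sd_paths u (fst u, snd u - int (Suc k))"
    by (auto intro!: sd_paths_snoc simp: sd_step_iff)
  then show ?case by blast
qed

lemma sd_paths_nonempty:
  assumes "fst u \<le> fst w"
  shows "sd_paths u w \<noteq> {}"
proof -
  have "sd_paths u (fst u + int a, snd w) \<noteq> {}" for a
  proof (induction a)
    case 0
    show ?case using sd_paths_vertical_nonempty[of u "nat \<bar>snd w - snd u\<bar>"]
      by (cases "snd w \<ge> snd u") auto
  next
    case (Suc a)
    then obtain \<pi> where "\<pi> \<in> sd_paths u (fst u + int a, snd w)" by blast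
    then have "\<pi> @ [(fst u + int (Suc a), snd w)] \<in> sd_paths u (fst u + int (Suc a), snd w)"
      by (rule sd_paths_snoc) (simp add: sd_step_iff)
    then show ?case by blast
  qed
  from this[of "nat (fst w - fst u)"] show ?thesis
    using assms by (cases w) simp
qed

lemma successively_sd_step_length:
  assumes "successively sd_step \<pi>" "\<pi> \<noteq> []"
  shows "\<bar>fst (last \<pi>) - fst (hd \<pi>)\<bar> + \<bar>snd (last \<pi>) - snd (hd \<pi>)\<bar> \<le> int (length \<pi>) - 1"
  using assms
proof (induction sd_step \<pi> rule: successively.induct)
  case (3 x y xs)
  then show ?case by (auto simp: sd_step_iff)
qed auto

text \<open>Cutting out a loop keeps a path semi-directed and, weights being nonnegative, does not
  increase its passage time.\<close>
lemma sd_paths_distinct_shortcut: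
  assumes "\<pi> \<in> sd_paths u w"
  shows "\<exists>\<pi>'\<in>sd_paths u w. distinct \<pi>' \<and> passage_time \<omega> \<pi>' \<le> passage_time \<omega> \<pi>"
  using assms
proof (induction "length \<pi>" arbitrary: \<pi> rule: less_induct)
  case less
  show ?case
  proof (cases "distinct \<pi>")
    case False
    then obtain xs ys zs y where \<pi>: "\<pi> = xs @ [y] @ ys @ [y] @ zs"
      using not_distinct_decomp by blast
    have "xs @ [y] @ zs \<in> sd_paths u w"
      using less.prems unfolding \<pi>
      by (auto simp: sd_paths_successively successively_append_iff successively_Cons hd_append
          split: if_splits)
    moreover have "passage_time \<omega> (xs @ [y] @ zs) \<le> passage_time \<omega> \<pi>"
      unfolding \<pi> passage_time_def by simp
    moreover have "length (xs @ [y] @ zs) < length \<pi>"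
      unfolding \<pi> by simp
    ultimately show ?thesis
      using less.hyps by (meson order_trans)
  qed (use less.prems in auto)
qed

lemma T_site_le_iff:
  assumes "sd_paths u w \<noteq> {}"
  shows "real (T_site \<omega> u w) \<le> t \<longleftrightarrow> (\<exists>\<pi>\<in>sd_paths u w. real (passage_time \<omega> \<pi>) \<le> t)"
proof
  assume "real (T_site \<omega> u w) \<le> t"
  moreover have "T_site \<omega> u w \<in> passage_time \<omega> ` sd_paths u w"
    unfolding T_site_def using assms by (intro Inf_nat_def1) auto
  ultimately show "\<exists>\<pi>\<in>sd_paths u w. real (passage_time \<omega> \<pi>) \<le> t"
    by auto
next
  assume "\<exists>\<pi>\<in>sd_paths u w. real (passage_time \<omega> \<pi>) \<le> t"
  then obtain \<pi> where \<pi>: "\<pi> \<in> sd_paths u w" "real (passage_time \<omega> \<pi>) \<le> t"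
    by blast
  have "T_site \<omega> u w \<le> passage_time \<omega> \<pi>"
    unfolding T_site_def using \<pi>(1) by (rule cINF_lower[rotated]) simp
  with \<pi>(2) show "real (T_site \<omega> u w) \<le> t"
    by linarith
qed

lemma sets_T_site_le:
  assumes "fst u \<le> fst w"
  shows "{b \<in> space (site_perc p). real (T_site (weight_of b) u w) \<le> t} \<in> sets (site_perc p)"
proof -
  have "{b \<in> space (site_perc p). real (T_site (weight_of b) u w) \<le> t} =
      (\<Union>\<pi>\<in>sd_paths u w. {b \<in> space (site_perc p). real (passage_time (weight_of b) \<pi>) \<le> t})"
    using T_site_le_iff[OF sd_paths_nonempty[OF assms]] by blast
  also have "\<dots> \<in> sets (site_perc p)"
    using borel_measurable_passage_time unfolding borel_measurable_iff_le
    by (intro sets.countable_UN'') auto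
  finally show ?thesis .
qed

definition sd_walks :: "nat \<Rightarrow> site \<Rightarrow> site list set" where
  "sd_walks L z = {\<pi>. length \<pi> = Suc L \<and> hd \<pi> = z \<and> successively sd_step \<pi>}"

lemma sd_walks_0: "sd_walks 0 z = {[z]}"
  by (auto simp: sd_walks_def length_Suc_conv)

lemma sd_walks_Suc_subset:
  "sd_walks (Suc L) z \<subseteq> (\<Union>d\<in>{(1,0), (0,1), (0,-1)}. Cons z ` sd_walks L (z + d))"
proof
  fix \<pi> assume "\<pi> \<in> sd_walks (Suc L) z"
  then obtain y r where \<pi>: "\<pi> = z # y # r" "length r = L" "sd_step z y" "successively sd_step (y # r)"
    by (auto simp: sd_walks_def length_Suc_conv)
  then have "y - z \<in> {(1,0), (0,1), (0,-1)}" and "y # r \<in> sd_walks L (z + (y - z))"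
    by (simp_all add: sd_step_def sd_walks_def)
  with \<pi>(1) show "\<pi> \<in> (\<Union>d\<in>{(1,0), (0,1), (0,-1)}. Cons z ` sd_walks L (z + d))"
    by blast
qed

lemma finite_sd_walks: "finite (sd_walks L z)"
proof (induction L arbitrary: z)
  case (Suc L)
  then show ?case by (blast intro: finite_subset[OF sd_walks_Suc_subset])
qed (simp add: sd_walks_0)

lemma card_sd_walks_le: "card (sd_walks L z) \<le> 3 ^ L"
proof (induction L arbitrary: z)
  case 0
  show ?case by (simp add: sd_walks_0)
next
  case (Suc L)
  let ?D = "{(1,0), (0,1), (0,-1)} :: site set"
  have "card (sd_walks (Suc L) z) \<le> card (\<Union>d\<in>?D. Cons z ` sd_walks L (z + d))"
    by (intro card_mono sd_walks_Suc_subset) (simp add: finite_sd_walks)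
  also have "\<dots> \<le> (\<Sum>d\<in>?D. card (Cons z ` sd_walks L (z + d)))"
    by (rule card_UN_le) simp
  also have "\<dots> \<le> (\<Sum>d\<in>?D. 3 ^ L)"
    by (intro sum_mono) (meson Suc.IH card_image_le finite_sd_walks le_trans)
  also have "\<dots> \<le> 3 ^ Suc L"
    by simp
  finally show ?case .
qed

definition walk_with_zeros :: "nat \<Rightarrow> site \<Rightarrow> nat \<Rightarrow> (site \<Rightarrow> bool) set" where
  "walk_with_zeros L z k = (\<Union>\<pi>\<in>sd_walks L z. \<Union>K\<in>{K. K \<subseteq> set \<pi> \<and> card K = k}. zero_on K)"

lemma sets_walk_with_zeros: "walk_with_zeros L z k \<in> sets (site_perc p)"
  unfolding walk_with_zeros_def
  by (intro sets.finite_UN finite_sd_walks sets_zero_on)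
    (auto intro: finite_subset[of _ "Pow (set _)"] finite_subset[of _ "set _"])

lemma card_subsets_sd_walk_le:
  assumes "\<pi> \<in> sd_walks L z"
  shows "card {K. K \<subseteq> set \<pi> \<and> card K = k} \<le> 2 ^ Suc L"
proof -
  have "card {K. K \<subseteq> set \<pi> \<and> card K = k} = card (set \<pi>) choose k"
    by (simp add: n_subsets)
  also have "\<dots> \<le> 2 ^ card (set \<pi>)"
    by (rule binomial_le_pow2)
  also have "\<dots> \<le> 2 ^ Suc L"
    using assms card_length[of \<pi>] by (intro power_increasing) (auto simp: sd_walks_def)
  finally show ?thesis .
qed

lemma measure_walk_with_zeros:
  assumes "0 \<le> p" "p \<le> 1"
  shows "measure (site_perc p) (walk_with_zeros L z k) \<le> 6 ^ Suc L * p ^ k"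
proof -
  let ?Ks = "\<lambda>\<pi>. {K. K \<subseteq> set \<pi> \<and> card K = k}"
  have fin_Ks: "finite (?Ks \<pi>)" for \<pi> :: "site list"
    by (rule finite_subset[of _ "Pow (set \<pi>)"]) auto
  have zero_on_sets: "zero_on K \<in> sets (site_perc p)" if "K \<in> ?Ks \<pi>" for K \<pi>
    using that by (intro sets_zero_on) (auto intro: finite_subset)
  have card_Ks: "real (card (?Ks \<pi>)) \<le> 2 ^ Suc L" if "\<pi> \<in> sd_walks L z" for \<pi>
    using card_subsets_sd_walk_le[OF that, of k] by (metis of_nat_le_iff of_nat_numeral of_nat_power)
  have "measure (site_perc p) (walk_with_zeros L z k)
      \<le> (\<Sum>\<pi>\<in>sd_walks L z. measure (site_perc p) (\<Union>K\<in>?Ks \<pi>. zero_on K))"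
    unfolding walk_with_zeros_def
    by (intro measure_UNION_le finite_sd_walks sets.finite_UN fin_Ks zero_on_sets)
  also have "\<dots> \<le> (\<Sum>\<pi>\<in>sd_walks L z. \<Sum>K\<in>?Ks \<pi>. measure (site_perc p) (zero_on K))"
    by (intro sum_mono measure_UNION_le fin_Ks zero_on_sets)
  also have "\<dots> = (\<Sum>\<pi>\<in>sd_walks L z. \<Sum>K\<in>?Ks \<pi>. p ^ k)"
    using assms by (intro sum.cong refl) (auto intro!: measure_zero_on finite_subset[of _ "set _"])
  also have "\<dots> = (\<Sum>\<pi>\<in>sd_walks L z. real (card (?Ks \<pi>)) * p ^ k)"
    by simp
  also have "\<dots> \<le> (\<Sum>\<pi>\<in>sd_walks L z. 2 ^ Suc L * p ^ k)"
    using assms card_Ks by (intro sum_mono mult_right_mono) auto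
  also have "\<dots> \<le> 3 ^ L * (2 ^ Suc L * p ^ k)"
    using assms card_sd_walks_le[of L z] by (simp add: mult_right_mono)
  also have "\<dots> \<le> 6 ^ Suc L * p ^ k"
  proof -
    have "(3::real) ^ L * 2 ^ Suc L \<le> 3 ^ Suc L * 2 ^ Suc L"
      by (intro mult_right_mono power_increasing) auto
    also have "\<dots> = 6 ^ Suc L"
      by (simp flip: power_mult_distrib)
    finally show ?thesis
      using assms by (simp add: mult.assoc[symmetric] mult_right_mono)
  qed
  finally show ?thesis .
qed

lemma sd_path_in_walk_with_zeros:
  assumes \<pi>: "\<pi> \<in> sd_paths u w" "distinct \<pi>"
    and L: "int L \<le> \<bar>fst w - fst u\<bar> + \<bar>snd w - snd u\<bar>"
    and k: "passage_time (weight_of b) \<pi> + k \<le> Suc L"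
  shows "b \<in> walk_with_zeros L u k"
proof -
  have steps: "successively sd_step \<pi>" and "\<pi> \<noteq> []" "hd \<pi> = u" "last \<pi> = w"
    using \<pi>(1) by (auto simp: sd_paths_successively)
  then have "Suc L \<le> length \<pi>"
    using successively_sd_step_length[OF steps] L by simp
  define \<pi>' where "\<pi>' = take (Suc L) \<pi>"
  have \<pi>_eq: "\<pi> = \<pi>' @ drop (Suc L) \<pi>"
    by (simp add: \<pi>'_def)
  have "successively sd_step \<pi>'"
    using steps by (subst (asm) \<pi>_eq) (simp add: successively_append_iff)
  with \<open>Suc L \<le> length \<pi>\<close> \<open>\<pi> \<noteq> []\<close> \<open>hd \<pi> = u\<close> have walk: "\<pi>' \<in> sd_walks L u"
    by (simp add: sd_walks_def \<pi>'_def hd_take)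
  have "distinct \<pi>'"
    using \<pi>(2) by (simp add: \<pi>'_def)
  then have card_set: "card (set \<pi>') = Suc L"
    using walk by (simp add: sd_walks_def distinct_card)
  have "passage_time (weight_of b) \<pi>' \<le> passage_time (weight_of b) \<pi>"
    unfolding passage_time_def \<pi>'_def by (metis append_take_drop_id le_add1 map_append sum_list_append)
  then have "card {z \<in> set \<pi>'. b z} + k \<le> Suc L"
    using k passage_time_distinct[OF \<open>distinct \<pi>'\<close>] by simp
  moreover have "card {z \<in> set \<pi>'. \<not> b z} = Suc L - card {z \<in> set \<pi>'. b z}"
  proof -
    have "{z \<in> set \<pi>'. \<not> b z} = set \<pi>' - {z \<in> set \<pi>'. b z}"
      by blast
    then show ?thesis
      using card_set by (simp add: card_Diff_subset)
  qed
  ultimately have "k \<le> card {z \<in> set \<pi>'. \<not> b z}"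
    by linarith
  then obtain K where "K \<subseteq> {z \<in> set \<pi>'. \<not> b z}" "card K = k"
    by (rule obtain_subset_with_card_n)
  with walk show ?thesis
    unfolding walk_with_zeros_def zero_on_def by blast
qed

lemma T_site_le_subset_walk_with_zeros:
  assumes "fst u \<le> fst w" "int L \<le> \<bar>fst w - fst u\<bar> + \<bar>snd w - snd u\<bar>"
    and "real k \<le> real (Suc L) - t"
  shows "{b. real (T_site (weight_of b) u w) \<le> t} \<subseteq> walk_with_zeros L u k"
proof
  fix b assume "b \<in> {b. real (T_site (weight_of b) u w) \<le> t}"
  then obtain \<pi> where "\<pi> \<in> sd_paths u w" "real (passage_time (weight_of b) \<pi>) \<le> t"
    using T_site_le_iff[OF sd_paths_nonempty[OF assms(1)]] by auto
  then obtain \<pi>' where \<pi>': "\<pi>' \<in> sd_paths u w" "distinct \<pi>'"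
    and "real (passage_time (weight_of b) \<pi>') \<le> t"
    using sd_paths_distinct_shortcut[of _ u w "weight_of b"] by force
  with assms(3) have "passage_time (weight_of b) \<pi>' + k \<le> Suc L"
    by linarith
  with \<pi>' assms(2) show "b \<in> walk_with_zeros L u k"
    by (rule sd_path_in_walk_with_zeros)
qed

lemma power_mult_power_le_exp:
  fixes a c \<epsilon> p x :: real
  assumes "a \<ge> 1" "c \<ge> 0" "\<epsilon> > 0" "x > 0" "0 \<le> p" "p < exp (- (1 + c * ln a) / \<epsilon>)"
    and "real N \<le> c * x" "\<epsilon> * x \<le> real k"
  shows "a ^ N * p ^ k \<le> exp (- x)"
proof (cases "p = 0")
  case True
  have "k > 0"
    using assms(3,4,8) by (metis mult_pos_pos of_nat_0_less_iff order_less_le_trans)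
  with True show ?thesis
    by (simp add: zero_power)
next
  case False
  with assms(5) have "p > 0"
    by simp
  have "ln p < - (1 + c * ln a) / \<epsilon>"
    using assms(6) \<open>p > 0\<close> by (metis exp_less_cancel_iff exp_ln)
  then have ln_p: "\<epsilon> * ln p < - (1 + c * ln a)"
    using assms(3) by (simp add: field_simps)
  have "0 \<le> c * ln a"
    using assms(1,2) by simp
  with ln_p have "\<epsilon> * ln p < 0"
    by linarith
  with assms(3) have "ln p < 0"
    by (simp add: mult_less_0_iff)
  have "real N * ln a + real k * ln p \<le> c * x * ln a + \<epsilon> * x * ln p"
    using assms(1,7,8) \<open>ln p < 0\<close>
    by (intro add_mono mult_right_mono mult_right_mono_neg) auto
  also have "\<dots> = x * (c * ln a) + x * (\<epsilon> * ln p)"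
    by (simp add: algebra_simps)
  also have "\<dots> \<le> x * (c * ln a) + x * (- (1 + c * ln a))"
    using ln_p assms(4) by (intro add_left_mono mult_left_mono) auto
  also have "\<dots> = - x"
    by (simp add: algebra_simps)
  finally have "real N * ln a + real k * ln p \<le> - x" .
  moreover have "a ^ N * p ^ k = exp (real N * ln a + real k * ln p)"
    using assms(1) \<open>p > 0\<close> by (simp add: exp_add exp_of_nat_mult)
  ultimately show ?thesis
    by simp
qed

lemma T_site_lower_tail:
  fixes \<epsilon> v p :: real and n :: nat
  assumes "\<epsilon> > 0" "0 \<le> p" "p \<le> 1" "p < exp (- (1 + (3 + \<bar>v\<bar>) * ln 6) / \<epsilon>)" "n \<ge> 1"
  defines "E \<equiv> {b \<in> space (site_perc p).
    real (T_site (weight_of b) (0,0) (int n, \<lceil>v * real n\<rceil>)) \<le> real n * (v + 1 - \<epsilon>)}"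
  shows "E \<in> sets (site_perc p) \<and> measure (site_perc p) E \<le> exp (- real n)"
proof -
  define m where "m = \<lceil>v * real n\<rceil>"
  define L where "L = n + nat \<bar>m\<bar>"
  define k where "k = nat \<lceil>\<epsilon> * real n\<rceil>"
  have m: "v * real n \<le> real_of_int m" "real_of_int m < v * real n + 1"
    unfolding m_def by linarith+
  have "real k = real_of_int \<lceil>\<epsilon> * real n\<rceil>"
    unfolding k_def using assms(1) by simp
  then have k: "\<epsilon> * real n \<le> real k" "real k < \<epsilon> * real n + 1"
    by linarith+
  have "E \<in> sets (site_perc p)"
    unfolding E_def by (rule sets_T_site_le) simp
  moreover have "E \<subseteq> walk_with_zeros L (0,0) k"
    unfolding E_def m_def[symmetric]
    using T_site_le_subset_walk_with_zeros[of "(0,0)" "(int n, m)" L k "real n * (v + 1 - \<epsilon>)"] m k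
    by (auto simp: L_def algebra_simps)
  ultimately have "measure (site_perc p) E \<le> measure (site_perc p) (walk_with_zeros L (0,0) k)"
    by (intro finite_measure.finite_measure_mono prob_space.finite_measure prob_space_site_perc
        sets_walk_with_zeros)
  also have "\<dots> \<le> 6 ^ Suc L * p ^ k"
    using assms(2,3) by (rule measure_walk_with_zeros)
  also have "\<dots> \<le> exp (- real n)"
  proof (rule power_mult_power_le_exp)
    have "\<bar>real_of_int m\<bar> \<le> \<bar>v * real n\<bar> + 1"
      using m by arith
    then show "real (Suc L) \<le> (3 + \<bar>v\<bar>) * real n"
      using assms(5) by (simp add: L_def abs_mult algebra_simps)
  qed (use assms k in auto)
  finally show ?thesis
    using \<open>E \<in> sets (site_perc p)\<close> by blast
qed

theorem lemma3p10:
  fixes \<epsilon> v :: real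
  assumes "\<epsilon> > 0"
  shows "\<exists>A B p\<^sub>\<epsilon> :: real. A > 0 \<and> B > 0 \<and> p\<^sub>\<epsilon> > 0 \<and>
    (\<forall>p n. 0 \<le> p \<and> p \<le> 1 \<and> p < p\<^sub>\<epsilon> \<and> n \<ge> (1::nat) \<longrightarrow>
      (let E = {b \<in> space (site_perc p).
                 real (T_site (weight_of b) (0,0) (int n, \<lceil>v * real n\<rceil>))
                   \<le> real n * (v + 1 - \<epsilon>)}
       in E \<in> sets (site_perc p) \<and> measure (site_perc p) E \<le> A * exp (- B * real n)))"
  using T_site_lower_tail[OF assms]
  by (intro exI[of _ 1] exI[of _ "exp (- (1 + (3 + \<bar>v\<bar>) * ln 6) / \<epsilon>)"]) (auto simp: Let_def)

end
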